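(* Let $\Gamma$ be a countable simplicial graph (no loops or multiple edges) and for each vertex $v\in V(\Gamma)$ let $G_v$ be a finitely generated group with a finite generating set $S_v=S_v^{-1}$ not containing the identity. Fix an injective map $\bar w:V(\Gamma)\to\{1,2,3,\dots\}$ (a one-to-one correspondence with $\mathbb{N}$ when $\Gamma$ is infinite) and equip the graph product $\Gamma\mathfrak{G}$ with the left-invariant metric $d(g,h)=\|g^{-1}h\|$, where $\|\gamma\|=\inf\{\sum_i w(s_i)\mid \gamma=s_1\cdots s_m,\ s_i\in\bigsqcup_v S_v\}$ (and $\|e\|=0$), with $w(s)=\bar w(v)$ for $s\in S_v$. Let $r>0$, let $\Gamma_r$ be the full subgraph of $\Gamma$ on the vertex set $\bar w^{-1}([0,r])$, and let $\Gamma_r\mathfrak{G}$ be the subgroup of $\Gamma\mathfrak{G}$ generated by the $G_v$ with $v\in V(\Gamma_r)$. Then every element of $\Gamma\mathfrak{G}$ can be written in the form $xb$ with $x$ permissible and $b\in\Gamma_r\mathfrak{G}$. Moreover, if $x\neq x'$ are permissible, then $d(xb,x'b')>r$ for all $b,b'\in\Gamma_r\mathfrak{G}$.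
   Context: The graph product $\Gamma\mathfrak{G}$ of groups $\{G_v\}_{v\in V(\Gamma)}$ is the free product of the $G_v$ modulo the relations $gg'=g'g$ for all $g\in G_v$, $g'\in G_{v'}$ whenever $\{v,v'\}$ is an edge of $\Gamma$. An expression $g=g_1\cdots g_\ell$ is an expression in syllables if each $g_i$ is non-trivial and lies in a single vertex group, and no two consecutive $g_i,g_{i+1}$ lie in the same vertex group. An element $x\in\Gamma\mathfrak{G}$ is called permissible (with respect to $\Gamma_r$) if no reduced word in syllables presenting $x$ ends with a non-trivial syllable belonging to $\Gamma_r\mathfrak{G}$ (i.e. to a vertex group $G_v$ with $v\in V(\Gamma_r)$); the identity is considered permissible. *)

theory Defs
  imports "HOL-Algebra.Algebra" "HOL-Library.Countable_Set"
begin

text \<open>Graph product of a family of groups G v (v in V) over a simplicial graph (V, E).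
  Elements are equivalence classes of words whose letters are pairs (v, g) with
  g in the carrier of G v.\<close>

definition gp_letters :: "'v set \<Rightarrow> ('v \<Rightarrow> 'g monoid) \<Rightarrow> ('v \<times> 'g) set" where
  "gp_letters V G = {(v, g). v \<in> V \<and> g \<in> carrier (G v)}"

inductive gp_move :: "('v \<Rightarrow> 'v \<Rightarrow> bool) \<Rightarrow> ('v \<Rightarrow> 'g monoid) \<Rightarrow> ('v \<times> 'g) list \<Rightarrow> ('v \<times> 'g) list \<Rightarrow> bool"
  for E G where
  merge: "gp_move E G (u @ [(v, a), (v, b)] @ w) (u @ [(v, a \<otimes>\<^bsub>G v\<^esub> b)] @ w)"
| delete: "gp_move E G (u @ [(v, \<one>\<^bsub>G v\<^esub>)] @ w) (u @ w)"
| commute: "E v v' \<Longrightarrow> gp_move E G (u @ [(v, a), (v', b)] @ w) (u @ [(v', b), (v, a)] @ w)"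

definition gp_rel :: "'v set \<Rightarrow> ('v \<Rightarrow> 'v \<Rightarrow> bool) \<Rightarrow> ('v \<Rightarrow> 'g monoid) \<Rightarrow> (('v \<times> 'g) list \<times> ('v \<times> 'g) list) set" where
  "gp_rel V E G = {(x, y). x \<in> lists (gp_letters V G) \<and>
     (symclp (\<lambda>a b. gp_move E G a b \<and> a \<in> lists (gp_letters V G) \<and> b \<in> lists (gp_letters V G)))\<^sup>*\<^sup>* x y}"

definition gp_class :: "'v set \<Rightarrow> ('v \<Rightarrow> 'v \<Rightarrow> bool) \<Rightarrow> ('v \<Rightarrow> 'g monoid) \<Rightarrow> ('v \<times> 'g) list \<Rightarrow> ('v \<times> 'g) list set" where
  "gp_class V E G x = gp_rel V E G `` {x}"

definition gp_mult :: "'v set \<Rightarrow> ('v \<Rightarrow> 'v \<Rightarrow> bool) \<Rightarrow> ('v \<Rightarrow> 'g monoid) \<Rightarrow> ('v \<times> 'g) list set \<Rightarrow> ('v \<times> 'g) list set \<Rightarrow> ('v \<times> 'g) list set" where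
  "gp_mult V E G A B = {z. \<exists>x\<in>A. \<exists>y\<in>B. z \<in> gp_class V E G (x @ y)}"

definition graph_product :: "'v set \<Rightarrow> ('v \<Rightarrow> 'v \<Rightarrow> bool) \<Rightarrow> ('v \<Rightarrow> 'g monoid) \<Rightarrow> ('v \<times> 'g) list set monoid" where
  "graph_product V E G =
    \<lparr> carrier = lists (gp_letters V G) // gp_rel V E G,
      monoid.mult = gp_mult V E G,
      one = gp_class V E G [] \<rparr>"

definition gp_sub :: "'v set \<Rightarrow> ('v \<Rightarrow> 'v \<Rightarrow> bool) \<Rightarrow> ('v \<Rightarrow> 'g monoid) \<Rightarrow> 'v set \<Rightarrow> ('v \<times> 'g) list set set" where
  "gp_sub V E G U = generate (graph_product V E G)
      (\<Union>v\<in>U. (\<lambda>g. gp_class V E G [(v, g)]) ` carrier (G v))"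

definition gp_norm :: "'v set \<Rightarrow> ('v \<Rightarrow> 'v \<Rightarrow> bool) \<Rightarrow> ('v \<Rightarrow> 'g monoid) \<Rightarrow> ('v \<Rightarrow> 'g set) \<Rightarrow> ('v \<Rightarrow> nat)
    \<Rightarrow> ('v \<times> 'g) list set \<Rightarrow> real" where
  "gp_norm V E G S wbar \<gamma> = Inf {(\<Sum>(v, s)\<leftarrow>ws. real (wbar v)) | ws.
      ws \<in> lists {(v, s). v \<in> V \<and> s \<in> S v} \<and> gp_class V E G ws = \<gamma>}"

definition gp_dist :: "'v set \<Rightarrow> ('v \<Rightarrow> 'v \<Rightarrow> bool) \<Rightarrow> ('v \<Rightarrow> 'g monoid) \<Rightarrow> ('v \<Rightarrow> 'g set) \<Rightarrow> ('v \<Rightarrow> nat)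
    \<Rightarrow> ('v \<times> 'g) list set \<Rightarrow> ('v \<times> 'g) list set \<Rightarrow> real" where
  "gp_dist V E G S wbar g h =
     gp_norm V E G S wbar (inv\<^bsub>graph_product V E G\<^esub> g \<otimes>\<^bsub>graph_product V E G\<^esub> h)"

definition syllable_word :: "'v set \<Rightarrow> ('v \<Rightarrow> 'g monoid) \<Rightarrow> ('v \<times> 'g) list \<Rightarrow> bool" where
  "syllable_word V G ws \<longleftrightarrow>
     ws \<in> lists {(v, g). v \<in> V \<and> g \<in> carrier (G v) \<and> g \<noteq> \<one>\<^bsub>G v\<^esub>} \<and>
     (\<forall>i. Suc i < length ws \<longrightarrow> fst (ws ! i) \<noteq> fst (ws ! Suc i))"

definition reduced_syllable_word :: "'v set \<Rightarrow> ('v \<Rightarrow> 'v \<Rightarrow> bool) \<Rightarrow> ('v \<Rightarrow> 'g monoid)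
    \<Rightarrow> ('v \<times> 'g) list set \<Rightarrow> ('v \<times> 'g) list \<Rightarrow> bool" where
  "reduced_syllable_word V E G x ws \<longleftrightarrow>
     syllable_word V G ws \<and> gp_class V E G ws = x \<and>
     (\<forall>ws'. syllable_word V G ws' \<and> gp_class V E G ws' = x \<longrightarrow> length ws \<le> length ws')"

definition permissible :: "'v set \<Rightarrow> ('v \<Rightarrow> 'v \<Rightarrow> bool) \<Rightarrow> ('v \<Rightarrow> 'g monoid) \<Rightarrow> 'v set
    \<Rightarrow> ('v \<times> 'g) list set \<Rightarrow> bool" where
  "permissible V E G U x \<longleftrightarrow>
     \<not> (\<exists>ws. reduced_syllable_word V E G x ws \<and> ws \<noteq> [] \<and> fst (last ws) \<in> U)"

end

theory Submission
  imports Defs "HOL-Library.Multiset"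
begin

text \<open>
  A word in the vertex groups is reduced if it has no trivial letters and no two letters of the
  same vertex separated only by letters of adjacent vertices. Every word reduces to such a word,
  and reduced words of the same element have the same length: appending a letter to a reduced
  word and reducing again is compatible with the defining moves of the graph product, up to
  equality of the projections onto pairs of non-adjacent vertices, which determine the length.

  Stripping final syllables from \<open>\<Gamma>\<^sub>r\<close> writes every element as x b with x permissible. If x and
  x c are permissible with c in the subgroup, then c = 1: otherwise either the concatenation of
  reduced words of x and c is reduced and ends in \<open>\<Gamma>\<^sub>r\<close>, or a syllable of x from \<open>\<Gamma>\<^sub>r\<close> cancels with
  one of c and can therefore be shuffled to the end of x. Hence (x b)\<inverse> x' b' lies outside the
  subgroup whenever x \<noteq> x', and a generator word of weight at most r only uses generators from
  \<open>\<Gamma>\<^sub>r\<close>; as weights are integers, its norm is at least \<lfloor>r\<rfloor> + 1 > r.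
\<close>

section \<open>The graph product as a group of word classes\<close>

locale graph_product_words =
  fixes V :: "'v set" and E :: "'v \<Rightarrow> 'v \<Rightarrow> bool" and G :: "'v \<Rightarrow> 'g monoid"
  assumes E_sym: "E u v \<Longrightarrow> E v u"
    and E_irrefl: "\<not> E v v"
    and vertex_group: "v \<in> V \<Longrightarrow> group (G v)"
begin

abbreviation "L \<equiv> gp_letters V G"
abbreviation "rel \<equiv> gp_rel V E G"
abbreviation "cls \<equiv> gp_class V E G"
abbreviation "GP \<equiv> graph_product V E G"

definition word_step :: "('v \<times> 'g) list \<Rightarrow> ('v \<times> 'g) list \<Rightarrow> bool" where
  "word_step a b \<longleftrightarrow> gp_move E G a b \<and> a \<in> lists L \<and> b \<in> lists L"

lemma rel_def': "rel = {(x, y). x \<in> lists L \<and> (symclp word_step)\<^sup>*\<^sup>* x y}"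
  unfolding gp_rel_def word_step_def [abs_def] by simp

lemma gp_letters_iff: "(v, g) \<in> L \<longleftrightarrow> v \<in> V \<and> g \<in> carrier (G v)"
  by (simp add: gp_letters_def)

lemma word_steps_lists: "(symclp word_step)\<^sup>*\<^sup>* x y \<Longrightarrow> x \<in> lists L \<Longrightarrow> y \<in> lists L"
  by (induction rule: rtranclp_induct) (auto simp: symclp_def word_step_def)

lemma rel_lists: "(x, y) \<in> rel \<Longrightarrow> x \<in> lists L \<and> y \<in> lists L"
  using word_steps_lists by (auto simp: rel_def')

lemma word_steps_sym: "(symclp word_step)\<^sup>*\<^sup>* x y \<Longrightarrow> (symclp word_step)\<^sup>*\<^sup>* y x"
proof (induction rule: rtranclp_induct)
  case (step y z)
  then have "symclp word_step z y" by (auto simp: symclp_def)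
  then show ?case using step.IH by (meson converse_rtranclp_into_rtranclp)
qed simp

lemma equiv_rel: "equiv (lists L) rel"
proof (rule equivI)
  show "rel \<subseteq> lists L \<times> lists L"
    using rel_lists by auto
  show "refl_on (lists L) rel"
    using rel_lists by (auto simp: refl_on_def rel_def')
  show "sym rel"
    unfolding sym_def rel_def' using word_steps_sym word_steps_lists by blast
  show "trans rel"
    unfolding trans_def rel_def' by auto
qed

lemma rel_refl: "x \<in> lists L \<Longrightarrow> (x, x) \<in> rel"
  using equiv_rel by (meson equiv_def refl_onD)

lemma rel_sym: "(x, y) \<in> rel \<Longrightarrow> (y, x) \<in> rel"
  using equiv_rel by (meson equiv_def symD)

lemma rel_trans: "(x, y) \<in> rel \<Longrightarrow> (y, z) \<in> rel \<Longrightarrow> (x, z) \<in> rel"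
  using equiv_rel by (meson equiv_def transD)

lemma gp_move_rel: "gp_move E G x y \<Longrightarrow> x \<in> lists L \<Longrightarrow> y \<in> lists L \<Longrightarrow> (x, y) \<in> rel"
  by (auto simp: rel_def' word_step_def symclp_def)

lemma gp_move_context: "gp_move E G x y \<Longrightarrow> gp_move E G (u @ x @ t) (u @ y @ t)"
proof (induction rule: gp_move.induct)
  case (merge u' v a b w)
  then show ?case using gp_move.merge [of E G "u @ u'" v a b "w @ t"] by simp
next
  case (delete u' v w)
  then show ?case using gp_move.delete [of E G "u @ u'" v "w @ t"] by simp
next
  case (commute v v' u' a b w)
  then show ?case using gp_move.commute [of E v v' G "u @ u'" a b "w @ t"] by simp
qed

lemma word_steps_context:
  assumes "(symclp word_step)\<^sup>*\<^sup>* x y" "u \<in> lists L" "t \<in> lists L"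
  shows "(symclp word_step)\<^sup>*\<^sup>* (u @ x @ t) (u @ y @ t)"
  using assms(1)
proof (induction rule: rtranclp_induct)
  case (step y z)
  have "symclp word_step (u @ y @ t) (u @ z @ t)"
    using step.hyps(2) assms(2,3) by (auto simp: symclp_def word_step_def intro: gp_move_context)
  then show ?case using step.IH by (meson rtranclp.rtrancl_into_rtrancl)
qed simp

lemma rel_context: "(x, y) \<in> rel \<Longrightarrow> u \<in> lists L \<Longrightarrow> t \<in> lists L \<Longrightarrow> (u @ x @ t, u @ y @ t) \<in> rel"
  using word_steps_context by (auto simp: rel_def')

lemma rel_append:
  assumes "(x, y) \<in> rel" "(x', y') \<in> rel"
  shows "(x @ x', y @ y') \<in> rel"
proof -
  have "(x @ x' @ [], y @ x' @ []) \<in> rel"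
    using rel_context [OF assms(1), of "[]" x'] assms rel_lists by simp
  moreover have "(y @ x' @ [], y @ y' @ []) \<in> rel"
    using rel_context [OF assms(2), of y "[]"] assms rel_lists by simp
  ultimately show ?thesis using rel_trans by simp
qed

lemma cls_in_carrier: "w \<in> lists L \<Longrightarrow> cls w \<in> carrier GP"
  by (auto simp: graph_product_def gp_class_def quotient_def)

lemma carrier_GPE:
  assumes "Y \<in> carrier GP"
  obtains w where "w \<in> lists L" "Y = cls w"
  using assms by (auto simp: graph_product_def gp_class_def elim!: quotientE)

lemma cls_eq_iff: "x \<in> lists L \<Longrightarrow> y \<in> lists L \<Longrightarrow> cls x = cls y \<longleftrightarrow> (x, y) \<in> rel"
  unfolding gp_class_def using eq_equiv_class_iff [OF equiv_rel] by simp

lemma mult_cls: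
  assumes "x \<in> lists L" "y \<in> lists L"
  shows "cls x \<otimes>\<^bsub>GP\<^esub> cls y = cls (x @ y)"
proof -
  have "{z. \<exists>x' \<in> cls x. \<exists>y' \<in> cls y. z \<in> cls (x' @ y')} = cls (x @ y)"
  proof (intro equalityI subsetI)
    fix z assume "z \<in> {z. \<exists>x' \<in> cls x. \<exists>y' \<in> cls y. z \<in> cls (x' @ y')}"
    then obtain x' y' where h: "(x, x') \<in> rel" "(y, y') \<in> rel" "(x' @ y', z) \<in> rel"
      by (auto simp: gp_class_def)
    then show "z \<in> cls (x @ y)"
      using rel_trans [OF rel_append [OF h(1,2)] h(3)] by (simp add: gp_class_def)
  next
    fix z assume "z \<in> cls (x @ y)"
    then show "z \<in> {z. \<exists>x' \<in> cls x. \<exists>y' \<in> cls y. z \<in> cls (x' @ y')}"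
      using assms rel_refl by (auto simp: gp_class_def)
  qed
  then show ?thesis by (simp add: graph_product_def gp_mult_def)
qed

lemma one_GP: "\<one>\<^bsub>GP\<^esub> = cls []"
  by (simp add: graph_product_def)

definition letter_inv :: "'v \<times> 'g \<Rightarrow> 'v \<times> 'g" where
  "letter_inv c = (fst c, inv\<^bsub>G (fst c)\<^esub> snd c)"

definition word_inv :: "('v \<times> 'g) list \<Rightarrow> ('v \<times> 'g) list" where
  "word_inv w = rev (map letter_inv w)"

lemma letter_inv_in_letters: "c \<in> L \<Longrightarrow> letter_inv c \<in> L"
  using vertex_group by (cases c) (auto simp: gp_letters_iff letter_inv_def)

lemma word_inv_lists: "w \<in> lists L \<Longrightarrow> word_inv w \<in> lists L"
  using letter_inv_in_letters by (auto simp: word_inv_def)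

lemma letter_inv_cancel:
  assumes "c \<in> L"
  shows "([c, letter_inv c], []) \<in> rel"
proof -
  obtain v g where c: "c = (v, g)" "v \<in> V" "g \<in> carrier (G v)"
    using assms by (cases c) (auto simp: gp_letters_iff)
  interpret group "G v" using vertex_group c(2) .
  have "gp_move E G ([] @ [(v, g), (v, inv\<^bsub>G v\<^esub> g)] @ []) ([] @ [(v, g \<otimes>\<^bsub>G v\<^esub> inv\<^bsub>G v\<^esub> g)] @ [])"
    by (rule gp_move.merge)
  then have "([(v, g), (v, inv\<^bsub>G v\<^esub> g)], [(v, \<one>\<^bsub>G v\<^esub>)]) \<in> rel"
    using gp_move_rel c by (simp add: gp_letters_iff)
  moreover have "gp_move E G ([] @ [(v, \<one>\<^bsub>G v\<^esub>)] @ []) ([] @ [])"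
    by (rule gp_move.delete)
  then have "([(v, \<one>\<^bsub>G v\<^esub>)], []) \<in> rel"
    using gp_move_rel c by (simp add: gp_letters_iff)
  ultimately show ?thesis
    using c rel_trans by (simp add: letter_inv_def)
qed

lemma word_inv_cancel: "w \<in> lists L \<Longrightarrow> (w @ word_inv w, []) \<in> rel"
proof (induction w)
  case Nil
  then show ?case using rel_refl by (simp add: word_inv_def)
next
  case (Cons c w)
  then have "(c # w @ word_inv w @ [letter_inv c], [c] @ [] @ [letter_inv c]) \<in> rel"
    using rel_context [OF Cons.IH, of "[c]" "[letter_inv c]"] letter_inv_in_letters by simp
  then show ?case
    using letter_inv_cancel Cons.prems rel_trans by (simp add: word_inv_def)
qed

lemma word_inv_word_inv:
  assumes "w \<in> lists L"
  shows "word_inv (word_inv w) = w"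
proof -
  have "letter_inv (letter_inv c) = c" if "c \<in> L" for c
    using that group.inv_inv [OF vertex_group] by (cases c) (simp add: gp_letters_iff letter_inv_def)
  then have "map (letter_inv \<circ> letter_inv) w = w"
    using assms by (induction w) auto
  then show ?thesis by (simp add: word_inv_def rev_map)
qed

lemma cls_word_inv_mult:
  assumes "w \<in> lists L"
  shows "cls (word_inv w) \<otimes>\<^bsub>GP\<^esub> cls w = \<one>\<^bsub>GP\<^esub>"
proof -
  have "(word_inv w @ w, []) \<in> rel"
    using word_inv_cancel [OF word_inv_lists [OF assms]] word_inv_word_inv [OF assms] by simp
  then show ?thesis
    using assms word_inv_lists by (simp add: mult_cls cls_eq_iff one_GP)
qed

lemma group_GP: "group GP"
proof (rule groupI)
  fix x y assume "x \<in> carrier GP" "y \<in> carrier GP"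
  then obtain a b where "a \<in> lists L" "b \<in> lists L" "x = cls a" "y = cls b"
    by (metis carrier_GPE)
  then show "x \<otimes>\<^bsub>GP\<^esub> y \<in> carrier GP" by (simp add: mult_cls cls_in_carrier)
next
  show "\<one>\<^bsub>GP\<^esub> \<in> carrier GP" using one_GP cls_in_carrier by simp
next
  fix x y z assume "x \<in> carrier GP" "y \<in> carrier GP" "z \<in> carrier GP"
  then obtain a b c where "a \<in> lists L" "b \<in> lists L" "c \<in> lists L" "x = cls a" "y = cls b" "z = cls c"
    by (metis carrier_GPE)
  then show "x \<otimes>\<^bsub>GP\<^esub> y \<otimes>\<^bsub>GP\<^esub> z = x \<otimes>\<^bsub>GP\<^esub> (y \<otimes>\<^bsub>GP\<^esub> z)" by (simp add: mult_cls)
next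
  fix x assume "x \<in> carrier GP"
  then obtain a where a: "a \<in> lists L" "x = cls a" by (metis carrier_GPE)
  then show "\<one>\<^bsub>GP\<^esub> \<otimes>\<^bsub>GP\<^esub> x = x" by (simp add: one_GP mult_cls)
  show "\<exists>y \<in> carrier GP. y \<otimes>\<^bsub>GP\<^esub> x = \<one>\<^bsub>GP\<^esub>"
    using a cls_word_inv_mult cls_in_carrier word_inv_lists by blast
qed

lemma inv_cls: "w \<in> lists L \<Longrightarrow> inv\<^bsub>GP\<^esub> (cls w) = cls (word_inv w)"
  using group.inv_equality [OF group_GP] cls_word_inv_mult cls_in_carrier word_inv_lists by blast

end

section \<open>Cancellable vertex sequences\<close>

text \<open>The two occurrences of a can be brought together by commutations, so a word whose vertex
  sequence has this shape is not reduced.\<close>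

definition cancellable :: "('v \<Rightarrow> 'v \<Rightarrow> bool) \<Rightarrow> 'v list \<Rightarrow> bool" where
  "cancellable E l \<longleftrightarrow> (\<exists>p a m q. l = p @ [a] @ m @ [a] @ q \<and> (\<forall>c \<in> set m. E a c))"

lemma cancellableI: "l = p @ [a] @ m @ [a] @ q \<Longrightarrow> \<forall>c \<in> set m. E a c \<Longrightarrow> cancellable E l"
  unfolding cancellable_def by blast

lemma cancellable_context: "cancellable E l \<Longrightarrow> cancellable E (u @ l @ t)"
  unfolding cancellable_def by (metis append.assoc)

lemma cancellable_Nil [simp]: "\<not> cancellable E []"
  by (simp add: cancellable_def)

lemma cancellable_singleton [simp]: "\<not> cancellable E [x]"
  by (auto simp: cancellable_def)

lemma cancellable_append_cases:
  assumes "cancellable E (xs @ ys)"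
  obtains "cancellable E xs" | "cancellable E ys"
  | p a m n q where "xs = p @ [a] @ m" "ys = n @ [a] @ q" "\<forall>c \<in> set (m @ n). E a c"
proof -
  obtain p a m q where l: "xs @ ys = p @ ([a] @ m @ [a] @ q)" and m: "\<forall>c \<in> set m. E a c"
    using assms by (auto simp: cancellable_def)
  from append_eq_append_conv2 [THEN iffD1, OF l] obtain us where
    "(xs = p @ us \<and> us @ ys = [a] @ m @ [a] @ q) \<or> (xs @ us = p \<and> ys = us @ [a] @ m @ [a] @ q)"
    by blast
  then show thesis
  proof (elim disjE conjE)
    assume xs: "xs = p @ us" and ys: "us @ ys = [a] @ m @ [a] @ q"
    show thesis
    proof (cases us)
      case Nil
      then have "ys = [] @ [a] @ m @ [a] @ q" using ys by simp
      then show thesis using m by (intro that(2) cancellableI)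
    next
      case (Cons a' us')
      then have us: "us = a # us'" and us': "us' @ ys = m @ ([a] @ q)" using ys by auto
      from append_eq_append_conv2 [THEN iffD1, OF us'] obtain r where
        "(us' = m @ r \<and> r @ ys = [a] @ q) \<or> (us' @ r = m \<and> ys = r @ [a] @ q)"
        by blast
      then show thesis
      proof (elim disjE conjE)
        assume us'_eq: "us' = m @ r" and ys': "r @ ys = [a] @ q"
        show thesis
        proof (cases r)
          case Nil
          then have "xs = p @ [a] @ m" "ys = [] @ [a] @ q" using xs us us'_eq ys' by simp_all
          then show thesis using m by (intro that(3) [of p a m "[]" q]) simp_all
        next
          case (Cons a'' r')
          then have "xs = p @ [a] @ m @ [a] @ r'" using xs us us'_eq ys' by simp
          then show thesis using m by (intro that(1) cancellableI)
        qed
      next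
        assume "us' @ r = m" "ys = r @ [a] @ q"
        moreover have "xs = p @ [a] @ us'" using xs us by simp
        ultimately show thesis using m by (intro that(3)) auto
      qed
    qed
  next
    assume "ys = us @ [a] @ m @ [a] @ q"
    then show thesis using m by (intro that(2) cancellableI)
  qed
qed

lemma cancellable_snocD:
  assumes "cancellable E (l @ [x])"
  shows "cancellable E l \<or> (\<exists>p m. l = p @ [x] @ m \<and> (\<forall>c \<in> set m. E x c))"
  using assms
proof (cases rule: cancellable_append_cases)
  case (3 p a m n q)
  then show ?thesis by (cases n) auto
qed auto

lemma cancellable_nth_Suc:
  assumes "Suc i < length l" "l ! i = l ! Suc i"
  shows "cancellable E l"
proof -
  have "l = take i l @ [l ! i] @ [] @ [l ! Suc i] @ drop (Suc (Suc i)) l"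
    using assms(1) by (simp add: Cons_nth_drop_Suc)
  then show ?thesis unfolding assms(2) by (rule cancellableI) simp
qed

context graph_product_words
begin

lemma cancellable_insert:
  assumes "cancellable E (P @ S)" "\<forall>x \<in> set S. E v x"
  shows "cancellable E (P @ [v] @ S)"
  using assms(1)
proof (cases rule: cancellable_append_cases)
  case 1
  then show ?thesis using cancellable_context [of E P "[]" "[v] @ S"] by simp
next
  case 2
  then show ?thesis using cancellable_context [of E S "P @ [v]" "[]"] by simp
next
  case (3 p a m n q)
  then have "E a v" using assms(2) E_sym by simp
  then show ?thesis using 3 by (intro cancellableI [of _ p a "m @ [v] @ n" q]) auto
qed

lemma cancellable_appendD:
  assumes "cancellable E (xs @ ys)" "\<not> cancellable E xs" "\<not> cancellable E ys"
  shows "\<exists>p a m. xs = p @ [a] @ m \<and> (\<forall>c \<in> set m. E a c) \<and> a \<in> set ys"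
  using assms(1)
proof (cases rule: cancellable_append_cases)
  case (3 p a m n q)
  then show ?thesis by auto
qed (use assms in auto)

lemma not_cancellable_shift:
  assumes n: "\<not> cancellable E (P @ [a] @ M)" and M: "\<forall>c \<in> set M. E a c"
  shows "\<not> cancellable E (P @ M @ [a])"
proof
  assume "cancellable E (P @ M @ [a])"
  then have "cancellable E (P @ M) \<or> (\<exists>p m. P @ M = p @ [a] @ m \<and> (\<forall>c \<in> set m. E a c))"
    using cancellable_snocD [of E "P @ M" a] by simp
  then show False
  proof
    assume "cancellable E (P @ M)"
    then show False using cancellable_insert M n by blast
  next
    assume "\<exists>p m. P @ M = p @ [a] @ m \<and> (\<forall>c \<in> set m. E a c)"
    then obtain p m where pm: "P @ M = p @ ([a] @ m)" "\<forall>c \<in> set m. E a c" by auto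
    have aM: "a \<notin> set M" using M E_irrefl by blast
    from append_eq_append_conv2 [THEN iffD1, OF pm(1)] obtain us where
      "(P = p @ us \<and> us @ M = [a] @ m) \<or> (P @ us = p \<and> M = us @ [a] @ m)"
      by blast
    with aM obtain us' where "P = p @ [a] @ us'" "us' @ M = m"
      by (cases us) auto
    then have "cancellable E (P @ [a] @ M)"
      using pm(2) by (intro cancellableI [of _ p a "us'" M]) auto
    then show False using n by simp
  qed
qed

end

section \<open>Uniqueness of the length of reduced words\<close>

fun split_last :: "'v \<Rightarrow> ('v \<times> 'g) list \<Rightarrow> (('v \<times> 'g) list \<times> 'g \<times> ('v \<times> 'g) list) option" where
  "split_last v [] = None"
| "split_last v (c # w) = (case split_last v w of
      Some (p, h, s) \<Rightarrow> Some (c # p, h, s)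
    | None \<Rightarrow> if fst c = v then Some ([], snd c, w) else None)"

lemma split_last_None_iff: "split_last v w = None \<longleftrightarrow> v \<notin> fst ` set w"
  by (induction w) (auto split: option.splits)

lemma split_last_SomeD: "split_last v w = Some (p, h, s) \<Longrightarrow> w = p @ [(v, h)] @ s \<and> v \<notin> fst ` set s"
proof (induction w arbitrary: p h s)
  case (Cons c w)
  show ?case
  proof (cases "split_last v w")
    case None
    then show ?thesis using Cons.prems split_last_None_iff [of v w] by (cases c) (auto split: if_splits)
  next
    case (Some t)
    then show ?thesis using Cons by (cases t) auto
  qed
qed simp

lemma split_last_append: "v \<notin> fst ` set s \<Longrightarrow> split_last v (p @ [(v, h)] @ s) = Some (p, h, s)"
  by (induction p) (simp_all add: split_last_None_iff [THEN iffD2])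

definition proj :: "'v \<Rightarrow> 'v \<Rightarrow> ('v \<times> 'g) list \<Rightarrow> ('v \<times> 'g) list" where
  "proj u v w = filter (\<lambda>c. fst c = u \<or> fst c = v) w"

lemma proj_append [simp]: "proj u v (a @ b) = proj u v a @ proj u v b"
  by (simp add: proj_def)

lemma proj_Cons [simp]: "proj u v (c # w) = (if fst c = u \<or> fst c = v then c # proj u v w else proj u v w)"
  by (simp add: proj_def)

lemma proj_Nil [simp]: "proj u v [] = []"
  by (simp add: proj_def)

lemma set_proj: "c \<in> set (proj u v w) \<longleftrightarrow> c \<in> set w \<and> (fst c = u \<or> fst c = v)"
  by (auto simp: proj_def)

lemma proj_self_Nil: "v \<notin> fst ` set w \<Longrightarrow> proj v v w = []"
  by (force simp: proj_def filter_empty_conv)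

lemma last_proj_split_last: "split_last v w = Some (p, h, s) \<Longrightarrow> last (proj v v w) = (v, h)"
  using split_last_SomeD [of v w p h s] proj_self_Nil [of v s] by simp

context graph_product_words
begin

definition syllables :: "('v \<times> 'g) set" where
  "syllables = {(v, g). v \<in> V \<and> g \<in> carrier (G v) \<and> g \<noteq> \<one>\<^bsub>G v\<^esub>}"

definition reduced :: "('v \<times> 'g) list \<Rightarrow> bool" where
  "reduced w \<longleftrightarrow> w \<in> lists syllables \<and> \<not> cancellable E (map fst w)"

lemma syllables_lists: "w \<in> lists syllables \<Longrightarrow> w \<in> lists L"
  by (auto simp: syllables_def gp_letters_def)

lemma reduced_lists: "reduced w \<Longrightarrow> w \<in> lists L"
  using syllables_lists by (simp add: reduced_def)

lemma reduced_Nil: "reduced []"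
  by (simp add: reduced_def)

lemma reduced_snocD: "reduced (w @ [c]) \<Longrightarrow> reduced w"
  unfolding reduced_def using cancellable_context [of E "map fst w" "[]" "[fst c]"] by auto

definition ends_in :: "'v \<Rightarrow> ('v \<times> 'g) list \<Rightarrow> bool" where
  "ends_in v w \<longleftrightarrow> (case split_last v w of
      None \<Rightarrow> False
    | Some (p, h, s) \<Rightarrow> (\<forall>x \<in> set s. E v (fst x)))"

lemma ends_inE:
  assumes "ends_in v w"
  obtains p h s where "split_last v w = Some (p, h, s)" "\<forall>x \<in> set s. E v (fst x)"
  using assms by (auto simp: ends_in_def split: option.splits)

lemma proj_Nil_if_adjacent:
  "\<forall>c \<in> set s. E v (fst c) \<Longrightarrow> \<not> E x y \<Longrightarrow> v = x \<or> v = y \<Longrightarrow> proj x y s = []"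
  unfolding proj_def filter_empty_conv using E_sym E_irrefl by metis

lemma ends_in_iff_proj:
  "ends_in v w \<longleftrightarrow> proj v v w \<noteq> [] \<and> (\<forall>u. \<not> E u v \<longrightarrow> fst (last (proj u v w)) = v)"
proof (cases "split_last v w")
  case None
  then have "proj v v w = []" using proj_self_Nil split_last_None_iff by metis
  then show ?thesis using None by (simp add: ends_in_def)
next
  case (Some t)
  then obtain p h s where t: "split_last v w = Some (p, h, s)" by (cases t) auto
  have w: "w = p @ [(v, h)] @ s" and vs: "v \<notin> fst ` set s"
    using split_last_SomeD [OF t] by simp_all
  show ?thesis
  proof
    assume "ends_in v w"
    then have "\<forall>c \<in> set s. E v (fst c)" using t by (simp add: ends_in_def)
    then have "proj u v s = []" if "\<not> E u v" for u
      using proj_Nil_if_adjacent that by blast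
    then show "proj v v w \<noteq> [] \<and> (\<forall>u. \<not> E u v \<longrightarrow> fst (last (proj u v w)) = v)"
      unfolding w by simp
  next
    assume B: "proj v v w \<noteq> [] \<and> (\<forall>u. \<not> E u v \<longrightarrow> fst (last (proj u v w)) = v)"
    have "E v (fst c)" if c: "c \<in> set s" for c
    proof (rule ccontr)
      assume nE: "\<not> E v (fst c)"
      have cv: "fst c \<noteq> v" using vs c by force
      have "c \<in> set (proj (fst c) v s)" using c by (simp add: set_proj)
      then have "proj (fst c) v s \<noteq> []" by auto
      then have "last (proj (fst c) v w) \<in> set (proj (fst c) v s)" unfolding w by simp
      then have "fst (last (proj (fst c) v w)) \<noteq> v" using vs by (force simp: set_proj)
      then show False using B nE E_sym by blast
    qed
    then show "ends_in v w" using t by (simp add: ends_in_def)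
  qed
qed

definition snoc_reduce :: "('v \<times> 'g) list \<Rightarrow> ('v \<times> 'g) \<Rightarrow> ('v \<times> 'g) list" where
  "snoc_reduce w c = (if snd c = \<one>\<^bsub>G (fst c)\<^esub> then w else
     (case split_last (fst c) w of
        Some (p, h, s) \<Rightarrow>
          if \<forall>x \<in> set s. E (fst c) (fst x) then
            (if h \<otimes>\<^bsub>G (fst c)\<^esub> snd c = \<one>\<^bsub>G (fst c)\<^esub> then p @ s
             else p @ [(fst c, h \<otimes>\<^bsub>G (fst c)\<^esub> snd c)] @ s)
          else w @ [c]
      | None \<Rightarrow> w @ [c]))"

lemma snoc_reduce_one [simp]: "snoc_reduce w (v, \<one>\<^bsub>G v\<^esub>) = w"
  by (simp add: snoc_reduce_def)

lemma snoc_reduce_not_ends_in: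
  "g \<noteq> \<one>\<^bsub>G v\<^esub> \<Longrightarrow> \<not> ends_in v w \<Longrightarrow> snoc_reduce w (v, g) = w @ [(v, g)]"
  by (auto simp: snoc_reduce_def ends_in_def split: option.splits)

lemma snoc_reduce_ends_in:
  "g \<noteq> \<one>\<^bsub>G v\<^esub> \<Longrightarrow> split_last v w = Some (p, h, s) \<Longrightarrow> \<forall>x \<in> set s. E v (fst x) \<Longrightarrow>
   snoc_reduce w (v, g) = (if h \<otimes>\<^bsub>G v\<^esub> g = \<one>\<^bsub>G v\<^esub> then p @ s else p @ [(v, h \<otimes>\<^bsub>G v\<^esub> g)] @ s)"
  by (simp add: snoc_reduce_def)

lemma proj_snoc_reduce:
  assumes "\<not> E x y"
  shows "proj x y (snoc_reduce w (v, g)) =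
    (if v \<noteq> x \<and> v \<noteq> y \<or> g = \<one>\<^bsub>G v\<^esub> then proj x y w
     else if ends_in v w then
       (if snd (last (proj v v w)) \<otimes>\<^bsub>G v\<^esub> g = \<one>\<^bsub>G v\<^esub> then butlast (proj x y w)
        else butlast (proj x y w) @ [(v, snd (last (proj v v w)) \<otimes>\<^bsub>G v\<^esub> g)])
     else proj x y w @ [(v, g)])"
proof (cases "g = \<one>\<^bsub>G v\<^esub> \<or> \<not> ends_in v w")
  case True
  then show ?thesis by (cases "g = \<one>\<^bsub>G v\<^esub>") (auto simp: snoc_reduce_not_ends_in)
next
  case False
  then obtain p h s where t: "split_last v w = Some (p, h, s)" and A: "\<forall>x \<in> set s. E v (fst x)"
    and g: "g \<noteq> \<one>\<^bsub>G v\<^esub>" and e: "ends_in v w"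
    by (auto elim: ends_inE)
  have w: "w = p @ [(v, h)] @ s" using split_last_SomeD [OF t] by simp
  have "proj x y s = []" if "v = x \<or> v = y"
    using proj_Nil_if_adjacent [OF A assms that] .
  then show ?thesis
    using g e snoc_reduce_ends_in [OF g t A] last_proj_split_last [OF t] unfolding w by auto
qed

lemma proj_snoc_reduce_other:
  "\<not> E x y \<Longrightarrow> v \<noteq> x \<Longrightarrow> v \<noteq> y \<Longrightarrow> proj x y (snoc_reduce w (v, g)) = proj x y w"
  by (simp add: proj_snoc_reduce)

definition proj_equiv :: "('v \<times> 'g) list \<Rightarrow> ('v \<times> 'g) list \<Rightarrow> bool" where
  "proj_equiv w w' \<longleftrightarrow> (\<forall>u v. \<not> E u v \<longrightarrow> proj u v w = proj u v w')"

lemma proj_equiv_refl: "proj_equiv w w"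
  by (simp add: proj_equiv_def)

lemma proj_equiv_sym: "proj_equiv w w' \<Longrightarrow> proj_equiv w' w"
  by (simp add: proj_equiv_def)

lemma proj_equiv_trans: "proj_equiv w w' \<Longrightarrow> proj_equiv w' w'' \<Longrightarrow> proj_equiv w w''"
  by (simp add: proj_equiv_def)

lemma proj_equiv_length:
  assumes "proj_equiv w w'"
  shows "length w = length w'"
proof -
  have "count_list (map fst w) v = count_list (map fst w') v" for v
  proof -
    have "proj v v w = proj v v w'" using assms E_irrefl by (simp add: proj_equiv_def)
    then show ?thesis
      by (simp add: proj_def count_list_eq_length_filter filter_map o_def eq_commute)
  qed
  then have "count (mset (map fst w)) v = count (mset (map fst w')) v" for v
    by (simp only: count_mset)
  then have "mset (map fst w) = mset (map fst w')" by (simp add: multiset_eq_iff)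
  then show ?thesis by (metis length_map size_mset)
qed

lemma proj_equiv_shift:
  assumes "\<forall>x \<in> set s. E v (fst x)"
  shows "proj_equiv (p @ [(v, h)] @ s) (p @ s @ [(v, h)])"
  unfolding proj_equiv_def using proj_Nil_if_adjacent [OF assms] by auto

lemma snoc_reduce_proj_equiv:
  assumes "proj_equiv w w'"
  shows "proj_equiv (snoc_reduce w c) (snoc_reduce w' c)"
proof -
  obtain v g where c: "c = (v, g)" by (cases c)
  have pe: "\<And>x y. \<not> E x y \<Longrightarrow> proj x y w = proj x y w'"
    using assms by (simp add: proj_equiv_def)
  then have pv: "proj v v w = proj v v w'" using E_irrefl by blast
  have en: "ends_in v w = ends_in v w'"
    unfolding ends_in_iff_proj using pe E_irrefl by metis
  show ?thesis unfolding proj_equiv_def c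
  proof (intro allI impI)
    fix x y assume nxy: "\<not> E x y"
    show "proj x y (snoc_reduce w (v, g)) = proj x y (snoc_reduce w' (v, g))"
      unfolding proj_snoc_reduce [OF nxy] en pv pe [OF nxy] by (rule refl)
  qed
qed

lemma ends_in_snoc_reduce_adjacent:
  assumes "E v v'"
  shows "ends_in v (snoc_reduce w (v', b)) = ends_in v w"
proof -
  have "v' \<noteq> v" using assms E_irrefl by blast
  moreover have "v' \<noteq> u" if "\<not> E u v" for u using that assms E_sym by blast
  ultimately show ?thesis
    unfolding ends_in_iff_proj using proj_snoc_reduce_other E_irrefl by simp
qed

lemma snoc_reduce_commute:
  assumes e: "E v v'"
  shows "proj_equiv (snoc_reduce (snoc_reduce w (v, a)) (v', b)) (snoc_reduce (snoc_reduce w (v', b)) (v, a))"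
proof -
  have swap: "proj x y (snoc_reduce (snoc_reduce w (u, a)) (u', b)) =
      proj x y (snoc_reduce (snoc_reduce w (u', b)) (u, a))"
    if "E u u'" "\<not> E x y" "u = x \<or> u = y" for u u' a b x y
  proof -
    have o: "u' \<noteq> x" "u' \<noteq> y" using that E_sym E_irrefl by auto
    have "proj u u (snoc_reduce w (u', b)) = proj u u w"
      using proj_snoc_reduce_other [OF E_irrefl] that(1) E_irrefl by metis
    then have "proj x y (snoc_reduce (snoc_reduce w (u', b)) (u, a)) = proj x y (snoc_reduce w (u, a))"
      by (simp only: proj_snoc_reduce [OF that(2), of "snoc_reduce w (u', b)"]
          proj_snoc_reduce [OF that(2), of w] proj_snoc_reduce_other [OF that(2) o]
          ends_in_snoc_reduce_adjacent [OF that(1)])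
    then show ?thesis using proj_snoc_reduce_other [OF that(2) o] by simp
  qed
  show ?thesis unfolding proj_equiv_def
  proof (intro allI impI)
    fix x y assume nxy: "\<not> E x y"
    consider "v = x \<or> v = y" | "v' = x \<or> v' = y" | "v \<noteq> x" "v \<noteq> y" "v' \<noteq> x" "v' \<noteq> y"
      by blast
    then show "proj x y (snoc_reduce (snoc_reduce w (v, a)) (v', b)) =
        proj x y (snoc_reduce (snoc_reduce w (v', b)) (v, a))"
      by cases (use swap [OF e nxy] swap [OF E_sym [OF e] nxy] proj_snoc_reduce_other [OF nxy] in auto)
  qed
qed

lemma snoc_reduce_reduced:
  assumes R: "reduced (w @ [(v, g)])"
  shows "snoc_reduce w (v, g) = w @ [(v, g)]"
proof -
  have g: "g \<noteq> \<one>\<^bsub>G v\<^esub>" using R by (auto simp: reduced_def syllables_def)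
  have "\<not> ends_in v w"
  proof
    assume "ends_in v w"
    then obtain p h s where t: "split_last v w = Some (p, h, s)" and A: "\<forall>x \<in> set s. E v (fst x)"
      by (rule ends_inE)
    have "map fst (w @ [(v, g)]) = map fst p @ [v] @ map fst s @ [v] @ []"
      using split_last_SomeD [OF t] by simp
    then have "cancellable E (map fst (w @ [(v, g)]))" using A by (intro cancellableI) auto
    then show False using R by (simp add: reduced_def)
  qed
  then show ?thesis using snoc_reduce_not_ends_in [OF g] by simp
qed

lemma not_cancellable_remove:
  assumes "reduced w" "split_last v w = Some (p, h, s)" "\<forall>x \<in> set s. E v (fst x)"
  shows "\<not> cancellable E (map fst (p @ s))"
proof
  assume "cancellable E (map fst (p @ s))"
  then have "cancellable E (map fst p @ [v] @ map fst s)"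
    using cancellable_insert assms(3) by simp
  then show False using assms(1) split_last_SomeD [OF assms(2)] by (simp add: reduced_def)
qed

lemma not_ends_in_remove:
  assumes R: "reduced w" and t: "split_last v w = Some (p, h, s)" and A: "\<forall>x \<in> set s. E v (fst x)"
  shows "\<not> ends_in v (p @ s)"
proof
  assume "ends_in v (p @ s)"
  then obtain p' h' s' where t': "split_last v (p @ s) = Some (p', h', s')"
    and A': "\<forall>x \<in> set s'. E v (fst x)"
    by (rule ends_inE)
  have w: "w = p @ [(v, h)] @ s" and vs: "v \<notin> fst ` set s" using split_last_SomeD [OF t] by simp_all
  have h's: "(v, h') \<notin> set s" using vs by force
  have "p @ s = p' @ ([(v, h')] @ s')" using split_last_SomeD [OF t'] by simp
  from append_eq_append_conv2 [THEN iffD1, OF this] obtain us where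
    "(p = p' @ us \<and> us @ s = [(v, h')] @ s') \<or> (p @ us = p' \<and> s = us @ [(v, h')] @ s')"
    by blast
  with h's obtain us' where p: "p = p' @ [(v, h')] @ us'" and us: "us' @ s = s'"
    by (cases us) auto
  have "map fst w = map fst p' @ [v] @ map fst us' @ [v] @ map fst s"
    unfolding w p by simp
  then have "cancellable E (map fst w)" using A' us by (intro cancellableI) auto
  then show False using R by (simp add: reduced_def)
qed

lemma not_cancellable_snoc:
  assumes R: "reduced w" and "\<not> ends_in v w"
  shows "\<not> cancellable E (map fst w @ [v])"
proof
  assume "cancellable E (map fst w @ [v])"
  then have "cancellable E (map fst w) \<or> (\<exists>p m. map fst w = p @ [v] @ m \<and> (\<forall>c \<in> set m. E v c))"
    by (rule cancellable_snocD)
  moreover have "\<not> cancellable E (map fst w)" using R by (simp add: reduced_def)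
  ultimately obtain P M where PM: "map fst w = P @ ([v] @ M)" and M: "\<forall>c \<in> set M. E v c"
    by auto
  from map_eq_append_conv [THEN iffD1, OF PM] obtain w1 w2 where
    w12: "w = w1 @ w2" "[v] @ M = map fst w2"
    by blast
  from w12(2) obtain c w3 where c: "w2 = c # w3" "fst c = v" "map fst w3 = M"
    by (cases w2) auto
  have A: "\<forall>x \<in> set w3. E v (fst x)" using M unfolding c(3) [symmetric] by simp
  then have "v \<notin> fst ` set w3" using E_irrefl by force
  then have "split_last v (w1 @ [(v, snd c)] @ w3) = Some (w1, snd c, w3)"
    by (rule split_last_append)
  moreover have "w1 @ [(v, snd c)] @ w3 = w" using w12(1) c by (cases c) simp
  ultimately have "ends_in v w" using A by (simp add: ends_in_def)
  then show False using assms(2) by simp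
qed

lemma reduced_snoc_reduce:
  assumes R: "reduced w" and v: "v \<in> V" and g: "g \<in> carrier (G v)"
  shows "reduced (snoc_reduce w (v, g))"
proof (cases "g = \<one>\<^bsub>G v\<^esub>")
  case True
  then show ?thesis using R by simp
next
  case g1: False
  interpret group "G v" using vertex_group v .
  have wNT: "w \<in> lists syllables" using R by (simp add: reduced_def)
  show ?thesis
  proof (cases "ends_in v w")
    case False
    then show ?thesis
      using not_cancellable_snoc [OF R False] snoc_reduce_not_ends_in [OF g1 False] wNT g g1 v
      by (simp add: reduced_def syllables_def)
  next
    case True
    then obtain p h s where t: "split_last v w = Some (p, h, s)" and A: "\<forall>x \<in> set s. E v (fst x)"
      by (rule ends_inE)
    have w: "w = p @ [(v, h)] @ s" using split_last_SomeD [OF t] by simp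
    then have h: "h \<in> carrier (G v)" and ps: "p @ s \<in> lists syllables"
      using wNT by (auto simp: syllables_def)
    have "p @ [(v, h \<otimes>\<^bsub>G v\<^esub> g)] @ s \<in> lists syllables" if "h \<otimes>\<^bsub>G v\<^esub> g \<noteq> \<one>\<^bsub>G v\<^esub>"
      using ps that h g v by (auto simp: syllables_def)
    moreover have "map fst (p @ [(v, h \<otimes>\<^bsub>G v\<^esub> g)] @ s) = map fst w" unfolding w by simp
    ultimately show ?thesis
      using snoc_reduce_ends_in [OF g1 t A] not_cancellable_remove [OF R t A] R ps
      by (simp add: reduced_def)
  qed
qed

lemma snoc_reduce_merge_ends_in:
  assumes R: "reduced w" and v: "v \<in> V" and a: "a \<in> carrier (G v)" and b: "b \<in> carrier (G v)"
    and a1: "a \<noteq> \<one>\<^bsub>G v\<^esub>" and b1: "b \<noteq> \<one>\<^bsub>G v\<^esub>"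
    and t: "split_last v w = Some (p, h, s)" and A: "\<forall>x \<in> set s. E v (fst x)"
  shows "proj_equiv (snoc_reduce (snoc_reduce w (v, a)) (v, b)) (snoc_reduce w (v, a \<otimes>\<^bsub>G v\<^esub> b))"
proof -
  interpret group "G v" using vertex_group v .
  have w: "w = p @ [(v, h)] @ s" and vs: "v \<notin> fst ` set s" using split_last_SomeD [OF t] by simp_all
  then have h: "h \<in> carrier (G v)" and h1: "h \<noteq> \<one>\<^bsub>G v\<^esub>"
    using R by (auto simp: reduced_def syllables_def)
  have ab: "snoc_reduce w (v, a \<otimes>\<^bsub>G v\<^esub> b) =
      (if h \<otimes>\<^bsub>G v\<^esub> (a \<otimes>\<^bsub>G v\<^esub> b) = \<one>\<^bsub>G v\<^esub> then p @ s else p @ [(v, h \<otimes>\<^bsub>G v\<^esub> (a \<otimes>\<^bsub>G v\<^esub> b))] @ s)"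
    using snoc_reduce_ends_in [OF _ t A, of "a \<otimes>\<^bsub>G v\<^esub> b"] h h1 w by (cases "a \<otimes>\<^bsub>G v\<^esub> b = \<one>\<^bsub>G v\<^esub>") auto
  show ?thesis
  proof (cases "h \<otimes>\<^bsub>G v\<^esub> a = \<one>\<^bsub>G v\<^esub>")
    case False
    have "snoc_reduce (snoc_reduce w (v, a)) (v, b) =
        (if h \<otimes>\<^bsub>G v\<^esub> a \<otimes>\<^bsub>G v\<^esub> b = \<one>\<^bsub>G v\<^esub> then p @ s else p @ [(v, h \<otimes>\<^bsub>G v\<^esub> a \<otimes>\<^bsub>G v\<^esub> b)] @ s)"
      using snoc_reduce_ends_in [OF a1 t A] snoc_reduce_ends_in [OF b1 split_last_append [OF vs] A] False
      by simp
    then show ?thesis using ab h a b by (simp add: m_assoc proj_equiv_refl)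
  next
    case True
    then have "h \<otimes>\<^bsub>G v\<^esub> (a \<otimes>\<^bsub>G v\<^esub> b) = b" using h a b by (simp add: m_assoc [symmetric])
    then have "snoc_reduce w (v, a \<otimes>\<^bsub>G v\<^esub> b) = p @ [(v, b)] @ s" using ab b1 by simp
    moreover have "snoc_reduce (snoc_reduce w (v, a)) (v, b) = p @ s @ [(v, b)]"
      using snoc_reduce_ends_in [OF a1 t A] True snoc_reduce_not_ends_in [OF b1 not_ends_in_remove [OF R t A]]
      by simp
    ultimately show ?thesis using proj_equiv_shift [OF A] proj_equiv_sym by simp
  qed
qed

lemma snoc_reduce_merge:
  assumes R: "reduced w" and v: "v \<in> V" and a: "a \<in> carrier (G v)" and b: "b \<in> carrier (G v)"
  shows "proj_equiv (snoc_reduce (snoc_reduce w (v, a)) (v, b)) (snoc_reduce w (v, a \<otimes>\<^bsub>G v\<^esub> b))"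
proof -
  interpret group "G v" using vertex_group v .
  consider "a = \<one>\<^bsub>G v\<^esub> \<or> b = \<one>\<^bsub>G v\<^esub>"
    | "a \<noteq> \<one>\<^bsub>G v\<^esub>" "b \<noteq> \<one>\<^bsub>G v\<^esub>" "ends_in v w"
    | "a \<noteq> \<one>\<^bsub>G v\<^esub>" "b \<noteq> \<one>\<^bsub>G v\<^esub>" "\<not> ends_in v w"
    by blast
  then show ?thesis
  proof cases
    case 1
    then show ?thesis using a b by (auto simp: proj_equiv_refl)
  next
    case 2
    then show ?thesis using snoc_reduce_merge_ends_in [OF R v a b] by (auto elim: ends_inE)
  next
    case 3
    then have "snoc_reduce (snoc_reduce w (v, a)) (v, b) =
        (if a \<otimes>\<^bsub>G v\<^esub> b = \<one>\<^bsub>G v\<^esub> then w else w @ [(v, a \<otimes>\<^bsub>G v\<^esub> b)])"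
      using snoc_reduce_not_ends_in snoc_reduce_ends_in [of b v "w @ [(v, a)]" w a "[]"]
        split_last_append [of v "[]" w a] by simp
    then show ?thesis using 3 snoc_reduce_not_ends_in by (simp add: proj_equiv_refl)
  qed
qed

definition reduce_word :: "('v \<times> 'g) list \<Rightarrow> ('v \<times> 'g) list" where
  "reduce_word w = foldl snoc_reduce [] w"

lemma foldl_snoc_reduce_proj_equiv:
  "proj_equiv w w' \<Longrightarrow> proj_equiv (foldl snoc_reduce w t) (foldl snoc_reduce w' t)"
  by (induction t arbitrary: w w') (simp_all add: snoc_reduce_proj_equiv)

lemma reduced_foldl_snoc_reduce: "reduced w \<Longrightarrow> t \<in> lists L \<Longrightarrow> reduced (foldl snoc_reduce w t)"
  by (induction t arbitrary: w) (auto simp: gp_letters_def intro!: reduced_snoc_reduce)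

lemma reduced_reduce_word: "w \<in> lists L \<Longrightarrow> reduced (reduce_word w)"
  unfolding reduce_word_def using reduced_foldl_snoc_reduce reduced_Nil by blast

lemma reduce_word_gp_move:
  "gp_move E G w1 w2 \<Longrightarrow> w1 \<in> lists L \<Longrightarrow> proj_equiv (reduce_word w1) (reduce_word w2)"
proof (induction rule: gp_move.induct)
  case (merge u v a b t)
  then have u: "u \<in> lists L" and v: "v \<in> V" and ab: "a \<in> carrier (G v)" "b \<in> carrier (G v)"
    by (auto simp: gp_letters_iff)
  show ?case
    using foldl_snoc_reduce_proj_equiv [OF snoc_reduce_merge [OF reduced_reduce_word [OF u] v ab]]
    by (simp add: reduce_word_def)
next
  case (delete u v t)
  then show ?case by (simp add: reduce_word_def proj_equiv_refl)
next
  case (commute v v' u a b t)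
  then show ?case
    unfolding reduce_word_def using foldl_snoc_reduce_proj_equiv snoc_reduce_commute by simp
qed

lemma reduce_word_rel:
  assumes "(w1, w2) \<in> rel"
  shows "proj_equiv (reduce_word w1) (reduce_word w2)"
proof -
  have "(symclp word_step)\<^sup>*\<^sup>* w1 w2" using assms by (simp add: rel_def')
  then show ?thesis
  proof (induction rule: rtranclp_induct)
    case (step y z)
    then have "proj_equiv (reduce_word y) (reduce_word z)"
      using reduce_word_gp_move proj_equiv_sym by (auto simp: symclp_def word_step_def)
    then show ?case using step.IH proj_equiv_trans by blast
  qed (rule proj_equiv_refl)
qed

lemma reduce_word_reduced: "reduced w \<Longrightarrow> reduce_word w = w"
proof (induction w rule: rev_induct)
  case (snoc c w)
  then show ?case
    using reduced_snocD snoc_reduce_reduced [of w "fst c" "snd c"] by (simp add: reduce_word_def)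
qed (simp add: reduce_word_def)

theorem reduced_rel_length_eq: "reduced w \<Longrightarrow> reduced w' \<Longrightarrow> (w, w') \<in> rel \<Longrightarrow> length w = length w'"
  using reduce_word_rel reduce_word_reduced proj_equiv_length by metis

section \<open>Reduction of words\<close>

lemma rel_commute_past:
  assumes "\<forall>c \<in> set m. E v (fst c)" "p \<in> lists L" "(v, a) \<in> L" "m \<in> lists L" "q \<in> lists L"
  shows "(p @ [(v, a)] @ m @ q, p @ m @ [(v, a)] @ q) \<in> rel"
  using assms
proof (induction m arbitrary: p)
  case Nil
  then show ?case using rel_refl by simp
next
  case (Cons c m)
  obtain v' b where c: "c = (v', b)" by (cases c)
  have "gp_move E G (p @ [(v, a), (v', b)] @ (m @ q)) (p @ [(v', b), (v, a)] @ (m @ q))"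
    using Cons.prems(1) c by (intro gp_move.commute) simp
  then have "(p @ [(v, a)] @ (c # m) @ q, (p @ [c]) @ [(v, a)] @ m @ q) \<in> rel"
    using gp_move_rel Cons.prems c by simp
  moreover have "((p @ [c]) @ [(v, a)] @ m @ q, (p @ [c]) @ m @ [(v, a)] @ q) \<in> rel"
    using Cons.IH [of "p @ [c]"] Cons.prems by simp
  ultimately show ?case using rel_trans by simp
qed

lemma cancellable_wordE:
  assumes "cancellable E (map fst w)"
  obtains p v a m b q where "w = p @ [(v, a)] @ m @ [(v, b)] @ q" "\<forall>c \<in> set m. E v (fst c)"
proof -
  obtain P x M Q where h: "map fst w = P @ ([x] @ M @ [x] @ Q)" "\<forall>c \<in> set M. E x c"
    using assms by (auto simp: cancellable_def)
  from map_eq_append_conv [THEN iffD1, OF h(1)] obtain p r1 where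
    r1: "w = p @ r1" "[x] @ M @ [x] @ Q = map fst r1"
    by blast
  then obtain c1 r2 where r2: "r1 = c1 # r2" "fst c1 = x" "M @ ([x] @ Q) = map fst r2"
    by (cases r1) auto
  from map_eq_append_conv [THEN iffD1, OF r2(3) [symmetric]] obtain m r3 where
    r3: "r2 = m @ r3" "map fst m = M" "map fst r3 = [x] @ Q"
    by metis
  then obtain c2 q where r4: "r3 = c2 # q" "fst c2 = x"
    by (cases r3) auto
  have "w = p @ [(x, snd c1)] @ m @ [(x, snd c2)] @ q"
    using r1(1) r2(1,2) r3(1) r4 by (cases c1, cases c2) simp
  moreover have "\<forall>c \<in> set m. E x (fst c)"
    using h(2) unfolding r3(2) [symmetric] by simp
  ultimately show thesis by (rule that)
qed

lemma rel_shorter_if_not_reduced: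
  assumes w: "w \<in> lists L" and nR: "\<not> reduced w"
  obtains w' where "(w, w') \<in> rel" "w' \<in> lists L" "length w' < length w"
    "set (map fst w') \<subseteq> set (map fst w)"
proof (cases "w \<in> lists syllables")
  case False
  then obtain c where c: "c \<in> set w" "c \<notin> syllables" by auto
  obtain p q where "w = p @ [c] @ q" using split_list [OF c(1)] by auto
  moreover have "snd c = \<one>\<^bsub>G (fst c)\<^esub>" using c w by (auto simp: syllables_def gp_letters_def)
  ultimately obtain v where pq: "w = p @ [(v, \<one>\<^bsub>G v\<^esub>)] @ q" by (metis prod.collapse)
  moreover have "gp_move E G (p @ [(v, \<one>\<^bsub>G v\<^esub>)] @ q) (p @ q)" by (rule gp_move.delete)
  ultimately have "(w, p @ q) \<in> rel" using gp_move_rel w by auto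
  then show thesis using w pq by (intro that [of "p @ q"]) auto
next
  case True
  then have "cancellable E (map fst w)" using nR by (simp add: reduced_def)
  then obtain p v a m b q where w': "w = p @ [(v, a)] @ m @ [(v, b)] @ q"
    and A: "\<forall>c \<in> set m. E v (fst c)"
    by (rule cancellable_wordE)
  have l: "p \<in> lists L" "(v, a) \<in> L" "(v, b) \<in> L" "m \<in> lists L" "q \<in> lists L"
    using w w' by auto
  then have v: "v \<in> V" and ab: "a \<otimes>\<^bsub>G v\<^esub> b \<in> carrier (G v)"
    using group.is_monoid [OF vertex_group] monoid.m_closed by (fastforce simp: gp_letters_iff)+
  have "(w, p @ m @ [(v, a)] @ ([(v, b)] @ q)) \<in> rel"
    unfolding w' using rel_commute_past [OF A l(1,2,4)] l by simp
  moreover have "gp_move E G ((p @ m) @ [(v, a), (v, b)] @ q) ((p @ m) @ [(v, a \<otimes>\<^bsub>G v\<^esub> b)] @ q)"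
    by (rule gp_move.merge)
  then have "(p @ m @ [(v, a)] @ ([(v, b)] @ q), p @ m @ [(v, a \<otimes>\<^bsub>G v\<^esub> b)] @ q) \<in> rel"
    using gp_move_rel l ab v by (simp add: gp_letters_iff)
  ultimately have "(w, p @ m @ [(v, a \<otimes>\<^bsub>G v\<^esub> b)] @ q) \<in> rel" by (rule rel_trans)
  then show thesis
    using l ab v w' by (intro that [of "p @ m @ [(v, a \<otimes>\<^bsub>G v\<^esub> b)] @ q"]) (auto simp: gp_letters_iff)
qed

lemma exists_reduced_rel:
  "w \<in> lists L \<Longrightarrow> \<exists>w'. (w, w') \<in> rel \<and> reduced w' \<and> length w' \<le> length w \<and>
     (\<not> reduced w \<longrightarrow> length w' < length w) \<and> set (map fst w') \<subseteq> set (map fst w)"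
proof (induction "length w" arbitrary: w rule: less_induct)
  case less
  show ?case
  proof (cases "reduced w")
    case True
    then show ?thesis using less.prems rel_refl by blast
  next
    case False
    obtain w2 where w2: "(w, w2) \<in> rel" "w2 \<in> lists L" "length w2 < length w"
      "set (map fst w2) \<subseteq> set (map fst w)"
      using rel_shorter_if_not_reduced [OF less.prems False] by blast
    then obtain w' where "(w2, w') \<in> rel" "reduced w'" "length w' \<le> length w2"
      "set (map fst w') \<subseteq> set (map fst w2)"
      using less.hyps by blast
    moreover from this have "(w, w') \<in> rel" using w2(1) rel_trans by blast
    ultimately show ?thesis using w2 by (intro exI [of _ w']) auto
  qed
qed

lemma syllable_word_if_reduced:
  assumes "reduced w"
  shows "syllable_word V G w"
proof -
  have "fst (w ! i) \<noteq> fst (w ! Suc i)" if "Suc i < length w" for i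
    using assms cancellable_nth_Suc [of i "map fst w" E] that by (auto simp: reduced_def)
  then show ?thesis using assms by (simp add: syllable_word_def reduced_def syllables_def)
qed

lemma syllable_word_lists: "syllable_word V G w \<Longrightarrow> w \<in> lists syllables"
  by (simp add: syllable_word_def syllables_def)

lemma reduced_syllable_word_iff: "reduced_syllable_word V E G x ws \<longleftrightarrow> reduced ws \<and> cls ws = x"
proof
  assume r: "reduced_syllable_word V E G x ws"
  then have c: "cls ws = x" and wL: "ws \<in> lists L"
    using syllable_word_lists syllables_lists by (auto simp: reduced_syllable_word_def)
  have "reduced ws"
  proof (rule ccontr)
    assume "\<not> reduced ws"
    then obtain w' where "(ws, w') \<in> rel" "reduced w'" "length w' < length ws"
      using exists_reduced_rel [OF wL] by metis
    moreover from this have "cls w' = x" using c wL rel_lists cls_eq_iff by metis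
    ultimately show False
      using r syllable_word_if_reduced by (force simp: reduced_syllable_word_def)
  qed
  then show "reduced ws \<and> cls ws = x" using c by simp
next
  assume a: "reduced ws \<and> cls ws = x"
  have "length ws \<le> length ws'" if b: "syllable_word V G ws'" "cls ws' = x" for ws'
  proof -
    have wL: "ws \<in> lists L" "ws' \<in> lists L"
      using a b reduced_lists syllable_word_lists syllables_lists by auto
    obtain w'' where w'': "(ws', w'') \<in> rel" "reduced w''" "length w'' \<le> length ws'"
      using exists_reduced_rel [OF wL(2)] by metis
    have "(ws, w'') \<in> rel" using a b wL cls_eq_iff rel_trans w''(1) by metis
    then show ?thesis using reduced_rel_length_eq a w'' by fastforce
  qed
  then show "reduced_syllable_word V E G x ws"
    using a syllable_word_if_reduced by (simp add: reduced_syllable_word_def)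
qed

section \<open>Permissible elements\<close>

lemma exists_reduced_cls:
  assumes "w \<in> lists L"
  obtains w' where "reduced w'" "cls w' = cls w" "set (map fst w') \<subseteq> set (map fst w)"
proof -
  obtain w' where w': "(w, w') \<in> rel" "reduced w'" "set (map fst w') \<subseteq> set (map fst w)"
    using exists_reduced_rel [OF assms] by blast
  then have "cls w' = cls w" using assms reduced_lists cls_eq_iff rel_sym by simp
  then show thesis using that w' by blast
qed

lemma subgroup_gp_sub:
  assumes "U \<subseteq> V"
  shows "subgroup (gp_sub V E G U) GP"
proof -
  have "(\<Union>v \<in> U. (\<lambda>g. cls [(v, g)]) ` carrier (G v)) \<subseteq> carrier GP"
    using assms by (auto intro!: cls_in_carrier simp: gp_letters_iff)
  then show ?thesis unfolding gp_sub_def by (rule group.generate_is_subgroup [OF group_GP])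
qed

lemma lists_gp_letters_mono: "U \<subseteq> V \<Longrightarrow> w \<in> lists (gp_letters U G) \<Longrightarrow> w \<in> lists L"
  by (auto simp: gp_letters_def)

lemma cls_in_gp_sub:
  assumes U: "U \<subseteq> V"
  shows "ws \<in> lists (gp_letters U G) \<Longrightarrow> cls ws \<in> gp_sub V E G U"
proof (induction ws)
  case Nil
  then show ?case using subgroup.one_closed [OF subgroup_gp_sub [OF U]] by (simp add: one_GP)
next
  case (Cons c ws)
  obtain v g where c: "c = (v, g)" "v \<in> U" "g \<in> carrier (G v)"
    using Cons.prems by (cases c) (auto simp: gp_letters_def)
  then have "cls [c] \<in> gp_sub V E G U"
    unfolding gp_sub_def by (intro generate.incl) blast
  moreover have "[c] \<in> lists L" "ws \<in> lists L"
    using c U Cons.prems lists_gp_letters_mono [OF U] by (auto simp: gp_letters_iff)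
  then have "cls (c # ws) = cls [c] \<otimes>\<^bsub>GP\<^esub> cls ws" using mult_cls by simp
  ultimately show ?case
    using subgroup.m_closed [OF subgroup_gp_sub [OF U]] Cons by simp
qed

lemma gp_subE:
  assumes U: "U \<subseteq> V" and b: "b \<in> gp_sub V E G U"
  obtains ws where "ws \<in> lists (gp_letters U G)" "b = cls ws"
proof -
  have "b \<in> generate GP (\<Union>v \<in> U. (\<lambda>g. cls [(v, g)]) ` carrier (G v))"
    using b by (simp add: gp_sub_def)
  then have "\<exists>ws \<in> lists (gp_letters U G). b = cls ws"
  proof (induction rule: generate.induct)
    case one
    then show ?case by (intro bexI [of _ "[]"]) (simp_all add: one_GP)
  next
    case (incl h)
    then show ?case by (auto simp: gp_letters_def)
  next
    case (inv h)
    then obtain v g where vg: "v \<in> U" "g \<in> carrier (G v)" "h = cls [(v, g)]" by blast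
    then have "inv\<^bsub>GP\<^esub> h = cls [(v, inv\<^bsub>G v\<^esub> g)]" and "inv\<^bsub>G v\<^esub> g \<in> carrier (G v)"
      using U inv_cls [of "[(v, g)]"] group.inv_closed [OF vertex_group]
      by (auto simp: word_inv_def letter_inv_def gp_letters_iff)
    then show ?case using vg by (auto simp: gp_letters_def)
  next
    case (eng h1 h2)
    then obtain w1 w2 where "w1 \<in> lists (gp_letters U G)" "h1 = cls w1"
      "w2 \<in> lists (gp_letters U G)" "h2 = cls w2"
      by blast
    then show ?case
      using mult_cls lists_gp_letters_mono [OF U] by (intro bexI [of _ "w1 @ w2"]) simp_all
  qed
  then show thesis using that by blast
qed

lemma gp_sub_reducedE:
  assumes U: "U \<subseteq> V" and c: "c \<in> gp_sub V E G U"
  obtains w where "reduced w" "cls w = c" "set (map fst w) \<subseteq> U"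
proof -
  obtain w0 where w0: "w0 \<in> lists (gp_letters U G)" "c = cls w0"
    using gp_subE [OF U c] .
  then obtain w where "reduced w" "cls w = c" "set (map fst w) \<subseteq> set (map fst w0)"
    using exists_reduced_cls lists_gp_letters_mono [OF U] by metis
  moreover have "set (map fst w0) \<subseteq> U" using w0(1) by (auto simp: gp_letters_def)
  ultimately show thesis using that by blast
qed

lemma carrier_GP_reducedE:
  assumes "x \<in> carrier GP"
  obtains w where "reduced w" "cls w = x"
  using assms exists_reduced_cls carrier_GPE by metis

lemma not_permissible_if_reduced:
  assumes "reduced w" "w \<noteq> []" "fst (last w) \<in> U"
  shows "\<not> permissible V E G U (cls w)"
  using assms reduced_syllable_word_iff unfolding permissible_def by blast

lemma not_permissibleE:
  assumes R: "reduced w" and np: "\<not> permissible V E G U (cls w)"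
  obtains w' c where "reduced w'" "length w' < length w" "c \<in> gp_letters U G" "cls w = cls (w' @ [c])"
proof -
  obtain ws where ws: "reduced_syllable_word V E G (cls w) ws" "ws \<noteq> []" "fst (last ws) \<in> U"
    using np by (auto simp: permissible_def)
  have Rs: "reduced ws" and cw: "cls ws = cls w" using ws(1) reduced_syllable_word_iff by auto
  obtain w' c where wsc: "ws = w' @ [c]" using ws(2) by (cases ws rule: rev_exhaust) auto
  have "length ws = length w"
    using reduced_rel_length_eq Rs R cw reduced_lists cls_eq_iff by metis
  moreover have "c \<in> gp_letters U G"
    using Rs ws(3) wsc by (cases c) (auto simp: reduced_def syllables_def gp_letters_def)
  moreover have "reduced w'" using reduced_snocD Rs wsc by blast
  ultimately show thesis using wsc cw by (intro that [of w' c]) auto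
qed

lemma permissible_decomposition_reduced:
  assumes U: "U \<subseteq> V" and R: "reduced w"
  shows "\<exists>x b. x \<in> carrier GP \<and> permissible V E G U x \<and> b \<in> gp_sub V E G U \<and> cls w = x \<otimes>\<^bsub>GP\<^esub> b"
  using R
proof (induction "length w" arbitrary: w rule: less_induct)
  case less
  interpret GP: group GP by (rule group_GP)
  interpret sub: subgroup "gp_sub V E G U" GP by (rule subgroup_gp_sub [OF U])
  have wL: "w \<in> lists L" using reduced_lists [OF less.prems] .
  show ?case
  proof (cases "permissible V E G U (cls w)")
    case True
    then show ?thesis using cls_in_carrier [OF wL] by (metis GP.r_one sub.one_closed)
  next
    case False
    then obtain w' c where w': "reduced w'" "length w' < length w" "c \<in> gp_letters U G"
      "cls w = cls (w' @ [c])"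
      using not_permissibleE [OF less.prems] by blast
    then obtain x b where xb: "x \<in> carrier GP" "permissible V E G U x" "b \<in> gp_sub V E G U"
      "cls w' = x \<otimes>\<^bsub>GP\<^esub> b"
      using less.hyps by blast
    have c: "cls [c] \<in> gp_sub V E G U" using cls_in_gp_sub [OF U] w'(3) by simp
    have "[c] \<in> lists L" using lists_gp_letters_mono [OF U, of "[c]"] w'(3) by simp
    then have "cls w = cls w' \<otimes>\<^bsub>GP\<^esub> cls [c]"
      using w'(4) mult_cls [OF reduced_lists [OF w'(1)]] by simp
    also have "\<dots> = x \<otimes>\<^bsub>GP\<^esub> (b \<otimes>\<^bsub>GP\<^esub> cls [c])"
      using xb c by (simp add: GP.m_assoc)
    finally show ?thesis using xb c by blast
  qed
qed

lemma permissible_decomposition: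
  "U \<subseteq> V \<Longrightarrow> g \<in> carrier GP \<Longrightarrow>
   \<exists>x b. x \<in> carrier GP \<and> permissible V E G U x \<and> b \<in> gp_sub V E G U \<and> g = x \<otimes>\<^bsub>GP\<^esub> b"
  using permissible_decomposition_reduced carrier_GP_reducedE by metis

lemma reduced_shift_to_end:
  assumes R: "reduced (p @ [(a, h)] @ m)" and A: "\<forall>c \<in> set m. E a (fst c)"
  shows "reduced (p @ m @ [(a, h)])" "cls (p @ m @ [(a, h)]) = cls (p @ [(a, h)] @ m)"
proof -
  have l: "p \<in> lists L" "(a, h) \<in> L" "m \<in> lists L" using reduced_lists [OF R] by auto
  have "\<not> cancellable E (map fst p @ [a] @ map fst m)" using R by (simp add: reduced_def)
  then have "\<not> cancellable E (map fst p @ map fst m @ [a])"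
    using not_cancellable_shift A by simp
  then show "reduced (p @ m @ [(a, h)])" using R by (auto simp: reduced_def)
  have "(p @ [(a, h)] @ m @ [], p @ m @ [(a, h)] @ []) \<in> rel"
    using rel_commute_past [OF A l, of "[]"] by simp
  then show "cls (p @ m @ [(a, h)]) = cls (p @ [(a, h)] @ m)"
    using l cls_eq_iff rel_sym by simp
qed

lemma cancellable_append_reducedE:
  assumes "reduced wx" "reduced wc" "cancellable E (map fst (wx @ wc))"
  obtains p a h m where "wx = p @ [(a, h)] @ m" "\<forall>c \<in> set m. E a (fst c)" "a \<in> set (map fst wc)"
proof -
  have "cancellable E (map fst wx @ map fst wc)" using assms(3) by simp
  moreover have "\<not> cancellable E (map fst wx)" "\<not> cancellable E (map fst wc)"
    using assms(1,2) by (simp_all add: reduced_def)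
  ultimately obtain P a M where PM: "map fst wx = P @ [a] @ M" "\<forall>c \<in> set M. E a c"
    "a \<in> set (map fst wc)"
    using cancellable_appendD by blast
  from map_eq_append_conv [THEN iffD1, OF PM(1)] obtain p r where
    pr: "wx = p @ r" "[a] @ M = map fst r"
    by blast
  then obtain h m where r: "r = (a, h) # m" "map fst m = M" by (cases r) auto
  have "\<forall>c \<in> set m. E a (fst c)" using PM(2) unfolding r(2) [symmetric] by simp
  then show thesis using pr r PM(3) by (intro that [of p a h m]) simp_all
qed

lemma permissible_mult_gp_sub:
  assumes U: "U \<subseteq> V" and x: "x \<in> carrier GP" and px: "permissible V E G U x"
    and pxc: "permissible V E G U (x \<otimes>\<^bsub>GP\<^esub> c)" and c: "c \<in> gp_sub V E G U"
  shows "x \<otimes>\<^bsub>GP\<^esub> c = x"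
proof -
  obtain wx where wx: "reduced wx" "cls wx = x" using carrier_GP_reducedE [OF x] .
  obtain wc where wc: "reduced wc" "cls wc = c" "set (map fst wc) \<subseteq> U"
    using gp_sub_reducedE [OF U c] .
  have "wc = []"
  proof (rule ccontr)
    assume ne: "wc \<noteq> []"
    show False
    proof (cases "cancellable E (map fst (wx @ wc))")
      case False
      then have "reduced (wx @ wc)" using wx wc by (simp add: reduced_def)
      then have "\<not> permissible V E G U (cls (wx @ wc))"
        by (rule not_permissible_if_reduced) (use ne wc(3) in auto)
      moreover have "x \<otimes>\<^bsub>GP\<^esub> c = cls (wx @ wc)"
        using mult_cls [OF reduced_lists [OF wx(1)] reduced_lists [OF wc(1)]] wx wc by simp
      ultimately show False using pxc by simp
    next
      case True
      then obtain p a h m where d: "wx = p @ [(a, h)] @ m" "\<forall>c \<in> set m. E a (fst c)"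
        "a \<in> set (map fst wc)"
        using cancellable_append_reducedE [OF wx(1) wc(1)] by blast
      have R: "reduced (p @ [(a, h)] @ m)" using wx(1) d(1) by simp
      have "\<not> permissible V E G U (cls (p @ m @ [(a, h)]))"
        by (rule not_permissible_if_reduced) (use reduced_shift_to_end(1) [OF R d(2)] d(3) wc(3) in auto)
      then show False using reduced_shift_to_end(2) [OF R d(2)] d(1) wx(2) px by simp
    qed
  qed
  then show ?thesis using x wc monoid.r_one [OF group.is_monoid [OF group_GP]] by (simp add: one_GP)
qed

lemma permissible_cosets_disjoint:
  assumes U: "U \<subseteq> V" and x: "x \<in> carrier GP" "x' \<in> carrier GP"
    and px: "permissible V E G U x" "permissible V E G U x'" and ne: "x \<noteq> x'"
    and b: "b \<in> gp_sub V E G U" "b' \<in> gp_sub V E G U"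
  shows "inv\<^bsub>GP\<^esub> (x \<otimes>\<^bsub>GP\<^esub> b) \<otimes>\<^bsub>GP\<^esub> (x' \<otimes>\<^bsub>GP\<^esub> b') \<notin> gp_sub V E G U"
proof
  interpret GP: group GP by (rule group_GP)
  interpret sub: subgroup "gp_sub V E G U" GP by (rule subgroup_gp_sub [OF U])
  assume y: "inv\<^bsub>GP\<^esub> (x \<otimes>\<^bsub>GP\<^esub> b) \<otimes>\<^bsub>GP\<^esub> (x' \<otimes>\<^bsub>GP\<^esub> b') \<in> gp_sub V E G U"
  define c where "c = inv\<^bsub>GP\<^esub> x \<otimes>\<^bsub>GP\<^esub> x'"
  have bc: "b \<in> carrier GP" "b' \<in> carrier GP" using b by auto
  have "b \<otimes>\<^bsub>GP\<^esub> (inv\<^bsub>GP\<^esub> b \<otimes>\<^bsub>GP\<^esub> c) = c"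
    using x bc by (simp add: c_def GP.m_assoc [symmetric])
  then have "c = b \<otimes>\<^bsub>GP\<^esub> (inv\<^bsub>GP\<^esub> (x \<otimes>\<^bsub>GP\<^esub> b) \<otimes>\<^bsub>GP\<^esub> (x' \<otimes>\<^bsub>GP\<^esub> b')) \<otimes>\<^bsub>GP\<^esub> inv\<^bsub>GP\<^esub> b'"
    using x bc by (simp add: c_def GP.inv_mult_group GP.m_assoc)
  then have "c \<in> gp_sub V E G U" using y b by simp
  moreover have "x \<otimes>\<^bsub>GP\<^esub> c = x'" using x by (simp add: c_def GP.m_assoc [symmetric])
  ultimately show False using permissible_mult_gp_sub [OF U x(1) px(1)] px(2) ne by metis
qed

end

section \<open>The weighted word metric\<close>

lemma sum_list_weight_of_nat: "(\<Sum>(v, s)\<leftarrow>ws. real (f v)) = real (\<Sum>(v, s)\<leftarrow>ws. f v)"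
  by (induction ws) auto

lemma weight_le_sum_list:
  fixes f :: "'v \<Rightarrow> nat"
  shows "(v, s) \<in> set ws \<Longrightarrow> f v \<le> (\<Sum>(v, s)\<leftarrow>ws. f v)"
  using member_le_sum_list [of "f v" "map (\<lambda>(v, s). f v) ws"] by force

locale graph_product_generators = graph_product_words V E G
  for V :: "'v set" and E and G :: "'v \<Rightarrow> 'g monoid" +
  fixes S :: "'v \<Rightarrow> 'g set"
  assumes S_sub: "v \<in> V \<Longrightarrow> S v \<subseteq> carrier (G v)"
    and S_inv: "v \<in> V \<Longrightarrow> s \<in> S v \<Longrightarrow> inv\<^bsub>G v\<^esub> s \<in> S v"
    and S_gen: "v \<in> V \<Longrightarrow> generate (G v) (S v) = carrier (G v)"
begin

abbreviation "gens \<equiv> {(v, s). v \<in> V \<and> s \<in> S v}"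

lemma generator_word_letter:
  assumes v: "v \<in> V" and g: "g \<in> carrier (G v)"
  shows "\<exists>ws \<in> lists gens. (ws, [(v, g)]) \<in> rel"
proof -
  have "g \<in> generate (G v) (S v)" using g S_gen [OF v] by simp
  then show ?thesis
  proof (induction rule: generate.induct)
    case one
    have "gp_move E G ([] @ [(v, \<one>\<^bsub>G v\<^esub>)] @ []) ([] @ [])" by (rule gp_move.delete)
    then have "([(v, \<one>\<^bsub>G v\<^esub>)], []) \<in> rel"
      using gp_move_rel v group.is_monoid [OF vertex_group] by (simp add: gp_letters_iff)
    then show ?case using rel_sym by (intro bexI [of _ "[]"]) auto
  next
    case (incl h)
    then have "[(v, h)] \<in> lists L" using S_sub v by (auto simp: gp_letters_iff)
    then show ?case using incl v rel_refl by (intro bexI [of _ "[(v, h)]"]) auto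
  next
    case (inv h)
    then have h': "inv\<^bsub>G v\<^esub> h \<in> S v" using S_inv v by blast
    then have "[(v, inv\<^bsub>G v\<^esub> h)] \<in> lists L" using S_sub v by (auto simp: gp_letters_iff)
    then show ?case using h' v rel_refl by (intro bexI [of _ "[(v, inv\<^bsub>G v\<^esub> h)]"]) auto
  next
    case (eng h1 h2)
    then obtain w1 w2 where w: "w1 \<in> lists gens" "(w1, [(v, h1)]) \<in> rel"
      "w2 \<in> lists gens" "(w2, [(v, h2)]) \<in> rel"
      by blast
    have h: "h1 \<in> carrier (G v)" "h2 \<in> carrier (G v)" using eng S_gen v by auto
    have "gp_move E G ([] @ [(v, h1), (v, h2)] @ []) ([] @ [(v, h1 \<otimes>\<^bsub>G v\<^esub> h2)] @ [])"
      by (rule gp_move.merge)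
    moreover have "h1 \<otimes>\<^bsub>G v\<^esub> h2 \<in> carrier (G v)"
      using monoid.m_closed [OF group.is_monoid [OF vertex_group [OF v]] h] .
    ultimately have "([(v, h1), (v, h2)], [(v, h1 \<otimes>\<^bsub>G v\<^esub> h2)]) \<in> rel"
      using gp_move_rel v h by (simp add: gp_letters_iff)
    moreover have "(w1 @ w2, [(v, h1)] @ [(v, h2)]) \<in> rel" using rel_append w(2,4) .
    ultimately show ?case using w rel_trans by (intro bexI [of _ "w1 @ w2"]) auto
  qed
qed

lemma generator_word: "w \<in> lists L \<Longrightarrow> \<exists>ws \<in> lists gens. (ws, w) \<in> rel"
proof (induction w)
  case Nil
  then show ?case using rel_refl by (intro bexI [of _ "[]"]) auto
next
  case (Cons c w)
  obtain v g where c: "c = (v, g)" "v \<in> V" "g \<in> carrier (G v)"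
    using Cons.prems by (cases c) (auto simp: gp_letters_iff)
  obtain w1 where w1: "w1 \<in> lists gens" "(w1, [(v, g)]) \<in> rel"
    using generator_word_letter c by blast
  obtain w2 where w2: "w2 \<in> lists gens" "(w2, w) \<in> rel" using Cons by auto
  have "(w1 @ w2, [(v, g)] @ w) \<in> rel" using rel_append [OF w1(2) w2(2)] .
  then show ?case using w1 w2 c by (intro bexI [of _ "w1 @ w2"]) auto
qed

lemma exists_generator_word_cls:
  assumes "y \<in> carrier GP"
  shows "\<exists>ws \<in> lists gens. cls ws = y"
proof -
  obtain w where w: "w \<in> lists L" "y = cls w" using carrier_GPE [OF assms] .
  then obtain ws where ws: "ws \<in> lists gens" "(ws, w) \<in> rel" using generator_word by blast
  then have "ws \<in> lists L" using rel_lists by blast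
  then have "cls ws = y" using ws(2) w by (simp add: cls_eq_iff)
  then show ?thesis using ws(1) by blast
qed

lemma cls_in_gp_sub_if_weight_le:
  assumes ws: "ws \<in> lists gens" and le: "real (\<Sum>(v, s)\<leftarrow>ws. wbar v) \<le> r"
  shows "cls ws \<in> gp_sub V E G {v \<in> V. real (wbar v) \<le> r}"
proof -
  have "c \<in> gp_letters {v \<in> V. real (wbar v) \<le> r} G" if c: "c \<in> set ws" for c
  proof -
    obtain v s where vs: "c = (v, s)" "v \<in> V" "s \<in> S v" using c ws by (cases c) auto
    have "wbar v \<le> (\<Sum>(v, s)\<leftarrow>ws. wbar v)" using weight_le_sum_list c vs(1) by metis
    then show ?thesis using vs S_sub le by (auto simp: gp_letters_def)
  qed
  then have "ws \<in> lists (gp_letters {v \<in> V. real (wbar v) \<le> r} G)" by blast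
  then show ?thesis by (rule cls_in_gp_sub [rotated]) blast
qed

lemma gp_norm_gt_if_not_in_gp_sub:
  assumes y: "y \<in> carrier GP" and ny: "y \<notin> gp_sub V E G {v \<in> V. real (wbar v) \<le> r}"
  shows "r < gp_norm V E G S wbar y"
proof -
  let ?N = "{(\<Sum>(v, s)\<leftarrow>ws. real (wbar v)) | ws. ws \<in> lists gens \<and> cls ws = y}"
  have "?N \<noteq> {}" using exists_generator_word_cls [OF y] by blast
  text \<open>The weights are natural numbers, so this bound keeps the infimum strictly above r.\<close>
  moreover have "real_of_int (\<lfloor>r\<rfloor> + 1) \<le> e" if e: "e \<in> ?N" for e
  proof -
    obtain ws where "e = (\<Sum>(v, s)\<leftarrow>ws. real (wbar v))" "ws \<in> lists gens" "cls ws = y"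
      using e by blast
    then have ws: "e = real (\<Sum>(v, s)\<leftarrow>ws. wbar v)" "ws \<in> lists gens" "cls ws = y"
      by (simp_all add: sum_list_weight_of_nat)
    have "\<not> real (\<Sum>(v, s)\<leftarrow>ws. wbar v) \<le> r"
      using cls_in_gp_sub_if_weight_le [OF ws(2)] ws(3) ny by blast
    then have "r < real (\<Sum>(v, s)\<leftarrow>ws. wbar v)" by simp
    then have "\<lfloor>r\<rfloor> < int (\<Sum>(v, s)\<leftarrow>ws. wbar v)" by (simp add: floor_less_iff)
    then have "\<lfloor>r\<rfloor> + 1 \<le> int (\<Sum>(v, s)\<leftarrow>ws. wbar v)" by linarith
    then have "real_of_int (\<lfloor>r\<rfloor> + 1) \<le> real_of_int (int (\<Sum>(v, s)\<leftarrow>ws. wbar v))"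
      by (simp only: of_int_le_iff)
    then show ?thesis using ws(1) by simp
  qed
  ultimately have "real_of_int (\<lfloor>r\<rfloor> + 1) \<le> Inf ?N" by (intro cInf_greatest) auto
  then show ?thesis by (simp add: gp_norm_def) linarith
qed

lemma gp_dist_permissible_cosets:
  fixes wbar :: "'v \<Rightarrow> nat" and r :: real
  defines "Vr \<equiv> {v \<in> V. real (wbar v) \<le> r}"
  assumes x: "x \<in> carrier GP" "x' \<in> carrier GP" and ne: "x \<noteq> x'"
    and px: "permissible V E G Vr x" "permissible V E G Vr x'"
    and b: "b \<in> gp_sub V E G Vr" "b' \<in> gp_sub V E G Vr"
  shows "r < gp_dist V E G S wbar (x \<otimes>\<^bsub>GP\<^esub> b) (x' \<otimes>\<^bsub>GP\<^esub> b')"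
proof -
  have Vr: "Vr \<subseteq> V" by (auto simp: Vr_def)
  interpret GP: group GP by (rule group_GP)
  interpret sub: subgroup "gp_sub V E G Vr" GP by (rule subgroup_gp_sub [OF Vr])
  show ?thesis
    unfolding gp_dist_def using permissible_cosets_disjoint [OF Vr x px ne b] x b
    by (intro gp_norm_gt_if_not_in_gp_sub) (auto simp: Vr_def)
qed

end

theorem lemma3p1:
  fixes V :: "'v set" and E :: "'v \<Rightarrow> 'v \<Rightarrow> bool" and G :: "'v \<Rightarrow> 'g monoid"
    and S :: "'v \<Rightarrow> 'g set" and wbar :: "'v \<Rightarrow> nat" and r :: real
  assumes countV: "countable V"
    and E_sym: "\<And>u v. E u v \<Longrightarrow> E v u"
    and E_irrefl: "\<And>v. \<not> E v v"
    and E_V: "\<And>u v. E u v \<Longrightarrow> u \<in> V \<and> v \<in> V"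
    and grp: "\<And>v. v \<in> V \<Longrightarrow> group (G v)"
    and S_fin: "\<And>v. v \<in> V \<Longrightarrow> finite (S v)"
    and S_sub: "\<And>v. v \<in> V \<Longrightarrow> S v \<subseteq> carrier (G v)"
    and S_inv: "\<And>v s. v \<in> V \<Longrightarrow> s \<in> S v \<Longrightarrow> inv\<^bsub>G v\<^esub> s \<in> S v"
    and S_one: "\<And>v. v \<in> V \<Longrightarrow> \<one>\<^bsub>G v\<^esub> \<notin> S v"
    and S_gen: "\<And>v. v \<in> V \<Longrightarrow> generate (G v) (S v) = carrier (G v)"
    and w_inj: "inj_on wbar V"
    and w_pos: "\<And>v. v \<in> V \<Longrightarrow> wbar v \<ge> 1"
    and w_bij: "infinite V \<Longrightarrow> wbar ` V = {1..}"
    and r_pos: "r > 0"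
  defines "GP \<equiv> graph_product V E G"
    and "Vr \<equiv> {v \<in> V. real (wbar v) \<le> r}"
  shows "(\<forall>g \<in> carrier GP. \<exists>x b. x \<in> carrier GP \<and> permissible V E G Vr x \<and>
            b \<in> gp_sub V E G Vr \<and> g = x \<otimes>\<^bsub>GP\<^esub> b)
       \<and> (\<forall>x x' b b'. x \<in> carrier GP \<and> x' \<in> carrier GP \<and>
            permissible V E G Vr x \<and> permissible V E G Vr x' \<and> x \<noteq> x' \<and>
            b \<in> gp_sub V E G Vr \<and> b' \<in> gp_sub V E G Vr \<longrightarrow>
            gp_dist V E G S wbar (x \<otimes>\<^bsub>GP\<^esub> b) (x' \<otimes>\<^bsub>GP\<^esub> b') > r)"
proof -
  have "graph_product_generators V E G S"
    unfolding graph_product_generators_def graph_product_words_def graph_product_generators_axioms_def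
    using E_sym E_irrefl grp S_sub S_inv S_gen by blast
  then interpret graph_product_generators V E G S .
  have "Vr \<subseteq> V" by (auto simp: Vr_def)
  then show ?thesis
    unfolding GP_def Vr_def
    using permissible_decomposition gp_dist_permissible_cosets by blast
qed

end
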